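(* Let $(A_n)_{n\in\mathbb N_0}$ be invertible matrices in $\mathbb R^{d\times d}$ such that $(A_n)$ and $(A_n^{-1})$ are uniformly bounded, let $(Q_n)_{n\in\mathbb N_0}$ be invertible matrices in $\mathbb R^{d\times d}$ and set $\tilde A_n=Q_{n+1}A_nQ_n^{-1}$. Fix $s\in\{1,\dots,d\}$. (i) If $Q_n=q_nI_d$ with $q_n\neq0$ for all $n$, then each of the four angular values $\theta_s^{\sup,\varlimsup},\theta_s^{\sup,\varliminf},\theta_s^{\varlimsup,\sup},\theta_s^{\varliminf,\sup}$ of $(A_n)$ coincides with the corresponding angular value of $(\tilde A_n)$. (ii) If $\lim_{n\to\infty}Q_n=Q$ with $Q$ orthogonal, the same conclusion as in (i) holds. (iii) If $\lim_{n\to\infty}Q_n=Q$ with $Q$ invertible, then each of the four angular values of $(A_n)$ vanishes if and only if the corresponding angular value of $(\tilde A_n)$ vanishes.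
   Context: For a sequence $(A_n)_{n\in\mathbb N_0}$ of invertible $d\times d$ matrices (the system $u_{n+1}=A_nu_n$) define the solution operator $\Phi(n,m)=A_{n-1}\cdots A_m$ for $n>m$ and $\Phi(n,n)=I_d$. $\mathcal G(s,d)$ is the Grassmannian of $s$-dimensional subspaces of $\mathbb R^d$. For $V,W\in\mathcal G(s,d)$ choose $P,Q\in\mathbb R^{d\times s}$ with orthonormal columns spanning $V,W$; the principal angles $0\le\phi_1\le\dots\le\phi_s\le\pi/2$ are defined by $\cos\phi_j=\sigma_j$ with $\sigma_1\ge\dots\ge\sigma_s\ge0$ the singular values of $P^\top Q$, and $\angle(V,W):=\phi_s$. For $V\in\mathcal G(s,d)$ let $a_{1,n}(V)=\sum_{j=1}^n\angle(\Phi(j-1,0)V,\Phi(j,0)V)$. The angular values of dimension $s$ are $\theta_s^{\sup,\varlimsup}=\sup_{V\in\mathcal G(s,d)}\varlimsup_{n\to\infty}\frac1n a_{1,n}(V)$, $\theta_s^{\sup,\varliminf}=\sup_{V}\varliminf_{n\to\infty}\frac1n a_{1,n}(V)$ (outer), and $\theta_s^{\varlimsup,\sup}=\varlimsup_{n\to\infty}\sup_V\frac1n a_{1,n}(V)$, $\theta_s^{\varliminf,\sup}=\varliminf_{n\to\infty}\sup_V\frac1na_{1,n}(V)$ (inner). *)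

theory Defs
  imports "HOL-Analysis.Analysis"
begin

text \<open>Dimension d is CARD('n); matrices are real^'n^'n.\<close>

text \<open>Solution operator: Phi A n m = A(n-1) ** ... ** A m for n > m, identity for n \<le> m.\<close>
primrec Phi :: "(nat \<Rightarrow> real^'n^'n) \<Rightarrow> nat \<Rightarrow> nat \<Rightarrow> real^'n^'n" where
  "Phi A 0 m = mat 1"
| "Phi A (Suc n) m = (if Suc n \<le> m then mat 1 else A n ** Phi A n m)"

definition Grassmannian :: "nat \<Rightarrow> (real^'n) set set" where
  "Grassmannian s = {V. subspace V \<and> dim V = s}"

text \<open>p 0, ..., p (s-1) are orthonormal columns of a d x s matrix P spanning V.\<close>
definition onb_of :: "nat \<Rightarrow> (real^'n) set \<Rightarrow> (nat \<Rightarrow> real^'n) \<Rightarrow> bool" where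
  "onb_of s V p \<longleftrightarrow> (\<forall>i<s. \<forall>j<s. p i \<bullet> p j = (if i = j then 1 else 0)) \<and> span (p ` {..<s}) = V"

text \<open>Smallest singular value sigma_s of the s x s matrix P^T Q
  (columns p, q): min over unit x in R^s of |P^T Q x|.\<close>
definition sigma_min :: "nat \<Rightarrow> (nat \<Rightarrow> real^'n) \<Rightarrow> (nat \<Rightarrow> real^'n) \<Rightarrow> real" where
  "sigma_min s p q = Inf {sqrt (\<Sum>i<s. (p i \<bullet> (\<Sum>j<s. x j *\<^sub>R q j))\<^sup>2) | x. (\<Sum>j<s. (x j)\<^sup>2) = 1}"

text \<open>Largest principal angle between V and W (both of dimension s = dim V).\<close>
definition sub_angle :: "(real^'n) set \<Rightarrow> (real^'n) set \<Rightarrow> real" where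
  "sub_angle V W = arccos (sigma_min (dim V) (SOME p. onb_of (dim V) V p) (SOME q. onb_of (dim V) W q))"

definition mimage :: "real^'n^'n \<Rightarrow> (real^'n) set \<Rightarrow> (real^'n) set" where
  "mimage M V = (\<lambda>v. M *v v) ` V"

definition a1n :: "(nat \<Rightarrow> real^'n^'n) \<Rightarrow> nat \<Rightarrow> (real^'n) set \<Rightarrow> real" where
  "a1n A n V = (\<Sum>j=1..n. sub_angle (mimage (Phi A (j-1) 0) V) (mimage (Phi A j 0) V))"

definition theta_sup_limsup :: "nat \<Rightarrow> (nat \<Rightarrow> real^'n^'n) \<Rightarrow> ereal" where
  "theta_sup_limsup s A = (SUP V\<in>Grassmannian s. limsup (\<lambda>n. ereal (a1n A n V / real n)))"

definition theta_sup_liminf :: "nat \<Rightarrow> (nat \<Rightarrow> real^'n^'n) \<Rightarrow> ereal" where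
  "theta_sup_liminf s A = (SUP V\<in>Grassmannian s. liminf (\<lambda>n. ereal (a1n A n V / real n)))"

definition theta_limsup_sup :: "nat \<Rightarrow> (nat \<Rightarrow> real^'n^'n) \<Rightarrow> ereal" where
  "theta_limsup_sup s A = limsup (\<lambda>n. SUP V\<in>Grassmannian s. ereal (a1n A n V / real n))"

definition theta_liminf_sup :: "nat \<Rightarrow> (nat \<Rightarrow> real^'n^'n) \<Rightarrow> ereal" where
  "theta_liminf_sup s A = liminf (\<lambda>n. SUP V\<in>Grassmannian s. ereal (a1n A n V / real n))"

end

theory Submission
  imports Defs
begin

(*
  For subspaces V, W of equal dimension, the largest principal angle is the arcsine of the gap
  sup {dist(w, V) | w in W, |w| = 1}: a unit vector w of W has a projection onto V of squared
  length 1 - dist(w, V)^2, so the smallest singular value of P^T Q is sqrt (1 - gap^2).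
  The gap satisfies a triangle inequality, grows at most by the factor |M| |M^-1| under an
  invertible matrix M, and moves by O(|M - N|) when M is replaced by N.

  Since Phi~(j, 0) Q_0 = Q_j Phi(j, 0), the j-th angle of the transformed system started in
  Q_0 V is the angle between Q_j X_j and Q_(j+1) X_(j+1), where X_j = Phi(j, 0) V.  Scalar
  matrices fix every subspace.  If Q_j -> Q, this angle is uniformly close to the angle between
  Q X_j and Q X_(j+1), which equals the original angle for orthogonal Q and is comparable to it
  up to a constant factor for invertible Q.  Uniform Cesaro averaging carries these stepwise
  relations over to a_(1,n)(V) / n and from there to all four angular values.
*)

section \<open>The gap between subspaces\<close>

definition subspace_gap :: "'a::euclidean_space set \<Rightarrow> 'a set \<Rightarrow> real" where
  "subspace_gap W V = (SUP w\<in>W \<inter> sphere 0 1. infdist w V)"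
  \<comment> \<open>junk for \<open>W = {0}\<close>, where the supremum ranges over the empty set\<close>

lemma orthogonal_projection_exists:
  fixes V :: "'a::euclidean_space set"
  assumes "subspace V"
  obtains u where "u \<in> V" "\<And>v. v \<in> V \<Longrightarrow> orthogonal (w - u) v"
proof -
  obtain y z where "y \<in> span V" "\<And>v. v \<in> span V \<Longrightarrow> orthogonal z v" "w = y + z"
    using orthogonal_subspace_decomp_exists by metis
  moreover have "span V = V"
    using assms by (simp add: span_eq_iff)
  ultimately show ?thesis
    using that[of y] by simp
qed

lemma infdist_subspace_eq_norm:
  fixes V :: "'a::euclidean_space set"
  assumes "subspace V" "u \<in> V" "\<And>v. v \<in> V \<Longrightarrow> orthogonal (w - u) v"
  shows "infdist w V = norm (w - u)"
proof (rule antisym)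
  show "infdist w V \<le> norm (w - u)"
    using infdist_le[OF assms(2)] by (simp add: dist_norm)
  obtain v where v: "v \<in> V" "infdist w V = dist w v"
    using infdist_attains_inf[of V w] assms(1,2) closed_subspace by blast
  have "orthogonal (w - u) (u - v)"
    using assms v(1) by (simp add: subspace_diff)
  then have "(norm (w - v))\<^sup>2 = (norm (w - u))\<^sup>2 + (norm (u - v))\<^sup>2"
    using norm_add_Pythagorean[of "w - u" "u - v"] by simp
  then have "norm (w - u) \<le> norm (w - v)"
    by (simp add: power2_le_imp_le)
  with v(2) show "norm (w - u) \<le> infdist w V"
    by (simp add: dist_norm)
qed

lemma infdist_subspace_le_norm:
  fixes V :: "'a::euclidean_space set"
  shows "subspace V \<Longrightarrow> infdist w V \<le> norm w"
  using infdist_le[OF subspace_0, of V w] by simp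

lemma infdist_subspace_scaleR:
  fixes V :: "'a::euclidean_space set"
  assumes "subspace V"
  shows "infdist (c *\<^sub>R w) V = \<bar>c\<bar> * infdist w V"
proof -
  obtain u where u: "u \<in> V" "\<And>v. v \<in> V \<Longrightarrow> orthogonal (w - u) v"
    using orthogonal_projection_exists[OF assms] by blast
  have "infdist (c *\<^sub>R w) V = norm (c *\<^sub>R w - c *\<^sub>R u)"
    using u assms by (intro infdist_subspace_eq_norm)
      (auto simp: subspace_scale orthogonal_clauses simp flip: scaleR_diff_right)
  also have "\<dots> = \<bar>c\<bar> * infdist w V"
    using infdist_subspace_eq_norm[OF assms u] by (simp flip: scaleR_diff_right)
  finally show ?thesis .
qed

lemma subspace_Int_sphere_nonempty:
  fixes W :: "'a::euclidean_space set"
  assumes "subspace W" "W \<noteq> {0}"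
  shows "W \<inter> sphere 0 1 \<noteq> {}"
proof -
  obtain w where "w \<in> W" "w \<noteq> 0"
    using assms subspace_0 by blast
  then have "(1 / norm w) *\<^sub>R w \<in> W \<inter> sphere 0 1"
    using assms(1) by (simp add: subspace_scale)
  then show ?thesis
    by blast
qed

lemma infdist_le_subspace_gap:
  fixes W V :: "'a::euclidean_space set"
  assumes "subspace V" "w \<in> W \<inter> sphere 0 1"
  shows "infdist w V \<le> subspace_gap W V"
  unfolding subspace_gap_def
proof (rule cSUP_upper[OF assms(2)])
  show "bdd_above ((\<lambda>w. infdist w V) ` (W \<inter> sphere 0 1))"
    by (auto intro!: bdd_aboveI[of _ 1] order_trans[OF infdist_subspace_le_norm[OF assms(1)]])
qed

lemma subspace_gap_le:
  fixes W V :: "'a::euclidean_space set"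
  assumes "W \<inter> sphere 0 1 \<noteq> {}" "\<And>w. w \<in> W \<inter> sphere 0 1 \<Longrightarrow> infdist w V \<le> c"
  shows "subspace_gap W V \<le> c"
  unfolding subspace_gap_def using assms by (rule cSUP_least)

lemma subspace_gap_nonneg:
  fixes W V :: "'a::euclidean_space set"
  assumes "subspace W" "subspace V" "W \<noteq> {0}"
  shows "0 \<le> subspace_gap W V"
  using subspace_Int_sphere_nonempty[OF assms(1,3)] infdist_le_subspace_gap[OF assms(2)]
  by (meson all_not_in_conv infdist_nonneg order_trans)

lemma subspace_gap_le_1:
  fixes W V :: "'a::euclidean_space set"
  assumes "subspace W" "subspace V" "W \<noteq> {0}"
  shows "subspace_gap W V \<le> 1"
proof (rule subspace_gap_le[OF subspace_Int_sphere_nonempty[OF assms(1,3)]])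
  show "infdist w V \<le> 1" if "w \<in> W \<inter> sphere 0 1" for w
    using infdist_subspace_le_norm[OF assms(2), of w] that by simp
qed

lemma infdist_le_norm_mult_subspace_gap:
  fixes W V :: "'a::euclidean_space set"
  assumes "subspace W" "subspace V" "w \<in> W"
  shows "infdist w V \<le> norm w * subspace_gap W V"
proof (cases "w = 0")
  case True
  then show ?thesis
    using assms(2) by (simp add: subspace_0)
next
  case False
  then have "(1 / norm w) *\<^sub>R w \<in> W \<inter> sphere 0 1"
    using assms(1,3) by (simp add: subspace_scale)
  from infdist_le_subspace_gap[OF assms(2) this] False show ?thesis
    by (simp add: infdist_subspace_scaleR[OF assms(2)] field_simps)
qed

lemma subspace_gap_triangle:
  fixes W V U :: "'a::euclidean_space set"
  assumes "subspace W" "subspace V" "subspace U" "W \<noteq> {0}" "V \<noteq> {0}"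
  shows "subspace_gap W U \<le> subspace_gap W V + subspace_gap V U"
proof (rule subspace_gap_le[OF subspace_Int_sphere_nonempty[OF assms(1,4)]])
  fix w assume w: "w \<in> W \<inter> sphere 0 1"
  obtain u where u: "u \<in> V" "\<And>v. v \<in> V \<Longrightarrow> orthogonal (w - u) v"
    using orthogonal_projection_exists[OF assms(2)] by blast
  have "(norm w)\<^sup>2 = (norm u)\<^sup>2 + (norm (w - u))\<^sup>2"
    using norm_add_Pythagorean[of u "w - u"] u by (simp add: orthogonal_commute)
  then have "(norm u)\<^sup>2 \<le> (norm w)\<^sup>2"
    using zero_le_power2[of "norm (w - u)"] by linarith
  then have "norm u \<le> 1"
    using w power2_le_imp_le[of "norm u" "norm w"] by simp
  have "infdist w U \<le> infdist u U + dist w u"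
    by (rule infdist_triangle)
  also have "dist w u \<le> subspace_gap W V"
    using infdist_subspace_eq_norm[OF assms(2) u] infdist_le_subspace_gap[OF assms(2) w]
    by (simp add: dist_norm)
  also have "infdist u U \<le> norm u * subspace_gap V U"
    by (rule infdist_le_norm_mult_subspace_gap[OF assms(2,3) u(1)])
  also have "\<dots> \<le> subspace_gap V U"
    using \<open>norm u \<le> 1\<close> subspace_gap_nonneg[OF assms(2,3,5)] by (simp add: mult_left_le_one_le)
  finally show "infdist w U \<le> subspace_gap W V + subspace_gap V U"
    by simp
qed

lemma subspace_gap_abs_diff_le:
  fixes W V W' V' :: "'a::euclidean_space set"
  assumes "subspace W" "subspace V" "subspace W'" "subspace V'"
    and "W \<noteq> {0}" "V \<noteq> {0}" "W' \<noteq> {0}" "V' \<noteq> {0}"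
  shows "\<bar>subspace_gap W V - subspace_gap W' V'\<bar>
    \<le> subspace_gap W W' + subspace_gap W' W + subspace_gap V V' + subspace_gap V' V"
proof -
  note triangle = subspace_gap_triangle and nonneg = subspace_gap_nonneg
  have "subspace_gap W V \<le> subspace_gap W W' + subspace_gap W' V' + subspace_gap V' V"
    using triangle[of W W' V] triangle[of W' V' V] assms by fastforce
  moreover have "subspace_gap W' V' \<le> subspace_gap W' W + subspace_gap W V + subspace_gap V V'"
    using triangle[of W' W V'] triangle[of W V V'] assms by fastforce
  moreover have "0 \<le> subspace_gap W W'" "0 \<le> subspace_gap W' W"
    "0 \<le> subspace_gap V V'" "0 \<le> subspace_gap V' V"
    using assms by (simp_all add: nonneg)
  ultimately show ?thesis
    by linarith
qed

lemma linear_image_Int_sphere_nonempty: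
  fixes f :: "'a::euclidean_space \<Rightarrow> 'b::euclidean_space"
  assumes "linear f" "subspace W" "W \<noteq> {0}" "\<And>x. norm x \<le> b * norm (f x)"
  shows "f ` W \<inter> sphere 0 1 \<noteq> {}"
proof -
  obtain w where "w \<in> W" "w \<noteq> 0"
    using assms(2,3) subspace_0 by blast
  then have "f w \<in> f ` W" "f w \<noteq> 0"
    using assms(4)[of w] by auto
  then show ?thesis
    using subspace_Int_sphere_nonempty[OF linear_subspace_image[OF assms(1,2)]] by blast
qed

lemma subspace_gap_linear_image_le:
  fixes f :: "'a::euclidean_space \<Rightarrow> 'b::euclidean_space"
  assumes f: "linear f" "\<And>x. norm (f x) \<le> a * norm x" "\<And>x. norm x \<le> b * norm (f x)"
    and W: "subspace W" "W \<noteq> {0}" and V: "subspace V"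
  shows "subspace_gap (f ` W) (f ` V) \<le> a * b * subspace_gap W V"
proof (rule subspace_gap_le[OF linear_image_Int_sphere_nonempty[OF f(1) W f(3)]])
  fix y assume "y \<in> f ` W \<inter> sphere 0 1"
  then obtain x where x: "x \<in> W" "y = f x" "norm (f x) = 1"
    by auto
  obtain u where u: "u \<in> V" "\<And>v. v \<in> V \<Longrightarrow> orthogonal (x - u) v"
    using orthogonal_projection_exists[OF V] by blast
  have "0 \<le> a"
    using f(2)[of x] x(3) by (smt (verit) mult_nonpos_nonneg norm_ge_zero)
  have "infdist y (f ` V) \<le> norm (f (x - u))"
    using infdist_le[of "f u" "f ` V" y] u(1) x(2) f(1) by (simp add: dist_norm linear_diff)
  also have "\<dots> \<le> a * infdist x V"
    using f(2) infdist_subspace_eq_norm[OF V u] by simp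
  also have "\<dots> \<le> a * (norm x * subspace_gap W V)"
    using infdist_le_norm_mult_subspace_gap[OF W(1) V x(1)] \<open>0 \<le> a\<close> by (rule mult_left_mono)
  also have "\<dots> \<le> a * (b * subspace_gap W V)"
    using f(3)[of x] x(3) subspace_gap_nonneg[OF W(1) V W(2)] \<open>0 \<le> a\<close>
    by (simp add: mult_left_mono mult_right_mono)
  finally show "infdist y (f ` V) \<le> a * b * subspace_gap W V"
    by (simp add: mult.assoc)
qed

lemma subspace_gap_perturbed_linear_image_le:
  fixes f g :: "'a::euclidean_space \<Rightarrow> 'b::euclidean_space"
  assumes f: "linear f" "\<And>x. norm x \<le> b * norm (f x)"
    and close: "\<And>x. norm (f x - g x) \<le> e * norm x"
    and X: "subspace X" "X \<noteq> {0}"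
  shows "subspace_gap (f ` X) (g ` X) \<le> e * b"
proof (rule subspace_gap_le[OF linear_image_Int_sphere_nonempty[OF f(1) X f(2)]])
  fix y assume "y \<in> f ` X \<inter> sphere 0 1"
  then obtain x where x: "x \<in> X" "y = f x" "norm (f x) = 1"
    by auto
  then have "x \<noteq> 0"
    using f(1) linear_0 by fastforce
  then have "0 \<le> e"
    using close[of x] by (metis norm_ge_zero order_trans zero_le_mult_iff zero_less_norm_iff not_le)
  have "infdist y (g ` X) \<le> norm (f x - g x)"
    using infdist_le[of "g x" "g ` X" y] x by (simp add: dist_norm)
  also have "\<dots> \<le> e * norm x"
    by (rule close)
  also have "\<dots> \<le> e * b"
    using f(2)[of x] x(3) \<open>0 \<le> e\<close> by (simp add: mult_left_mono)
  finally show "infdist y (g ` X) \<le> e * b" .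
qed

lemma subspace_gap_attained:
  fixes W V :: "'a::euclidean_space set"
  assumes "subspace W" "W \<noteq> {0}"
  obtains w where "w \<in> W \<inter> sphere 0 1" "subspace_gap W V = infdist w V"
    "\<And>w'. w' \<in> W \<inter> sphere 0 1 \<Longrightarrow> infdist w' V \<le> infdist w V"
proof -
  have "compact (sphere 0 1 \<inter> W)"
    using assms(1) by (intro compact_Int_closed compact_sphere closed_subspace)
  then have "compact (W \<inter> sphere 0 1)"
    by (simp add: Int_commute)
  moreover have "continuous_on (W \<inter> sphere 0 1) (\<lambda>w. infdist w V)"
    by (intro continuous_intros)
  ultimately obtain w where w: "w \<in> W \<inter> sphere 0 1"
    "\<And>w'. w' \<in> W \<inter> sphere 0 1 \<Longrightarrow> infdist w' V \<le> infdist w V"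
    using continuous_attains_sup subspace_Int_sphere_nonempty[OF assms] by metis
  moreover have "subspace_gap W V = infdist w V"
    unfolding subspace_gap_def using w by (intro cSup_eq_maximum) auto
  ultimately show ?thesis
    using that by blast
qed

section \<open>The largest principal angle as an arcsine of the gap\<close>

lemma onb_of_exists:
  fixes V :: "(real^'n) set"
  assumes "subspace V"
  shows "\<exists>p. onb_of (dim V) V p"
proof -
  obtain B where B: "pairwise orthogonal B" "\<And>x. x \<in> B \<Longrightarrow> norm x = 1"
    "independent B" "card B = dim V" "span B = V"
    using orthonormal_basis_subspace[OF assms] by metis
  obtain p where p: "bij_betw p {..<dim V} B"
    using ex_bij_betw_nat_finite[of B] B(3,4) independent_imp_finite
    by (metis atLeast0LessThan)
  have "p i \<bullet> p j = (if i = j then 1 else 0)" if "i < dim V" "j < dim V" for i j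
  proof (cases "i = j")
    case True
    then show ?thesis
      using B(2) bij_betw_apply[OF p] that by (simp add: norm_eq_1)
  next
    case False
    then have "p i \<noteq> p j"
      using bij_betw_imp_inj_on[OF p] that by (metis inj_onD lessThan_iff)
    then show ?thesis
      using B(1) bij_betw_apply[OF p] that False by (simp add: pairwise_def orthogonal_def)
  qed
  then have "onb_of (dim V) V p"
    unfolding onb_of_def using B(5) bij_betw_imp_surj_on[OF p] by auto
  then show ?thesis
    by blast
qed

lemma subspace_onb_of: "onb_of s V p \<Longrightarrow> subspace V"
  unfolding onb_of_def by (metis subspace_span)

lemma onb_of_sum_in:
  assumes "onb_of s V p"
  shows "(\<Sum>j<s. x j *\<^sub>R p j) \<in> V"
proof -
  have "(\<Sum>j<s. x j *\<^sub>R p j) \<in> span (p ` {..<s})"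
    by (intro span_sum span_scale span_base) auto
  then show ?thesis
    using assms unfolding onb_of_def by simp
qed

lemma onb_of_inner_sum:
  assumes "onb_of s V p" "k < s"
  shows "p k \<bullet> (\<Sum>j<s. x j *\<^sub>R p j) = x k"
proof -
  have "p k \<bullet> (\<Sum>j<s. x j *\<^sub>R p j) = (\<Sum>j<s. x j * (p k \<bullet> p j))"
    by (simp add: inner_sum_right)
  also have "\<dots> = (\<Sum>j<s. if j = k then x j else 0)"
    using assms unfolding onb_of_def by (intro sum.cong) auto
  also have "\<dots> = x k"
    using assms(2) by simp
  finally show ?thesis .
qed

lemma onb_of_norm_sum:
  assumes "onb_of s V p"
  shows "(norm (\<Sum>j<s. x j *\<^sub>R p j))\<^sup>2 = (\<Sum>j<s. (x j)\<^sup>2)"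
proof -
  have "(norm (\<Sum>j<s. x j *\<^sub>R p j))\<^sup>2 = (\<Sum>i<s. x i * (p i \<bullet> (\<Sum>j<s. x j *\<^sub>R p j)))"
    by (simp add: power2_norm_eq_inner inner_sum_left)
  also have "\<dots> = (\<Sum>i<s. (x i)\<^sup>2)"
    using onb_of_inner_sum[OF assms] by (intro sum.cong) (auto simp: power2_eq_square)
  finally show ?thesis .
qed

lemma onb_of_projection:
  assumes "onb_of s V p" "v \<in> V"
  shows "orthogonal (w - (\<Sum>i<s. (p i \<bullet> w) *\<^sub>R p i)) v"
proof -
  have "v \<in> span (p ` {..<s})"
    using assms unfolding onb_of_def by blast
  then show ?thesis
  proof (rule orthogonal_to_span)
    fix y assume "y \<in> p ` {..<s}"
    then obtain k where "k < s" "y = p k"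
      by blast
    then show "orthogonal (w - (\<Sum>i<s. (p i \<bullet> w) *\<^sub>R p i)) y"
      using onb_of_inner_sum[OF assms(1), of k "\<lambda>i. p i \<bullet> w"]
      by (simp add: orthogonal_def inner_diff_right inner_commute[of _ "p k"])
  qed
qed

lemma onb_of_sum_inner_squares:
  assumes "onb_of s V p"
  shows "(\<Sum>i<s. (p i \<bullet> w)\<^sup>2) = (norm w)\<^sup>2 - (infdist w V)\<^sup>2"
proof -
  define u where "u = (\<Sum>i<s. (p i \<bullet> w) *\<^sub>R p i)"
  have u: "u \<in> V" "\<And>v. v \<in> V \<Longrightarrow> orthogonal (w - u) v"
    unfolding u_def using onb_of_sum_in[OF assms] onb_of_projection[OF assms] by auto
  have "orthogonal u (w - u)"
    using u(2)[OF u(1)] by (simp add: orthogonal_commute)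
  moreover have "infdist w V = norm (w - u)"
    by (rule infdist_subspace_eq_norm[OF subspace_onb_of[OF assms] u])
  ultimately have "(norm w)\<^sup>2 = (norm u)\<^sup>2 + (infdist w V)\<^sup>2"
    using norm_add_Pythagorean[of u "w - u"] by simp
  then show ?thesis
    using onb_of_norm_sum[OF assms] by (simp add: u_def)
qed

lemma onb_of_expansion:
  assumes "onb_of s V p" "w \<in> V"
  shows "(\<Sum>i<s. (p i \<bullet> w) *\<^sub>R p i) = w"
proof -
  have "norm (w - (\<Sum>i<s. (p i \<bullet> w) *\<^sub>R p i)) = infdist w V"
    using onb_of_sum_in[OF assms(1)] onb_of_projection[OF assms(1)]
    by (intro infdist_subspace_eq_norm[symmetric] subspace_onb_of[OF assms(1)])
  then show ?thesis
    using assms(2) by simp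
qed

lemma sigma_min_eq_Inf_infdist:
  assumes p: "onb_of s V p" and q: "onb_of s W q"
  shows "sigma_min s p q = Inf ((\<lambda>w. sqrt (1 - (infdist w V)\<^sup>2)) ` (W \<inter> sphere 0 1))"
proof -
  have "{sqrt (\<Sum>i<s. (p i \<bullet> (\<Sum>j<s. x j *\<^sub>R q j))\<^sup>2) | x. (\<Sum>j<s. (x j)\<^sup>2) = 1}
      = (\<lambda>x. sqrt (\<Sum>i<s. (p i \<bullet> (\<Sum>j<s. x j *\<^sub>R q j))\<^sup>2)) ` {x. (\<Sum>j<s. (x j)\<^sup>2) = 1}"
    by blast
  also have "\<dots> = (\<lambda>x. sqrt (1 - (infdist (\<Sum>j<s. x j *\<^sub>R q j) V)\<^sup>2)) ` {x. (\<Sum>j<s. (x j)\<^sup>2) = 1}"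
    by (intro image_cong) (simp_all add: onb_of_sum_inner_squares[OF p] onb_of_norm_sum[OF q])
  also have "\<dots> = (\<lambda>w. sqrt (1 - (infdist w V)\<^sup>2)) ` ((\<lambda>x. \<Sum>j<s. x j *\<^sub>R q j) ` {x. (\<Sum>j<s. (x j)\<^sup>2) = 1})"
    by (simp add: image_image)
  also have "(\<lambda>x. \<Sum>j<s. x j *\<^sub>R q j) ` {x. (\<Sum>j<s. (x j)\<^sup>2) = 1} = W \<inter> sphere 0 1"
  proof (intro equalityI subsetI)
    fix w assume "w \<in> (\<lambda>x. \<Sum>j<s. x j *\<^sub>R q j) ` {x. (\<Sum>j<s. (x j)\<^sup>2) = 1}"
    then show "w \<in> W \<inter> sphere 0 1"
      using onb_of_sum_in[OF q] onb_of_norm_sum[OF q] by (auto simp: norm_eq_1 power2_norm_eq_inner)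
  next
    fix w assume w: "w \<in> W \<inter> sphere 0 1"
    then have "w = (\<Sum>j<s. (q j \<bullet> w) *\<^sub>R q j)" "(\<Sum>j<s. (q j \<bullet> w)\<^sup>2) = 1"
      using onb_of_expansion[OF q] onb_of_norm_sum[OF q, of "\<lambda>j. q j \<bullet> w"] by auto
    then show "w \<in> (\<lambda>x. \<Sum>j<s. x j *\<^sub>R q j) ` {x. (\<Sum>j<s. (x j)\<^sup>2) = 1}"
      by (intro image_eqI[of _ _ "\<lambda>j. q j \<bullet> w"]) auto
  qed
  finally show ?thesis
    unfolding sigma_min_def by simp
qed

lemma sigma_min_eq_sqrt_subspace_gap:
  assumes p: "onb_of s V p" and q: "onb_of s W q" and "W \<noteq> {0}"
  shows "sigma_min s p q = sqrt (1 - (subspace_gap W V)\<^sup>2)"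
proof -
  obtain w where w: "w \<in> W \<inter> sphere 0 1" "subspace_gap W V = infdist w V"
    "\<And>w'. w' \<in> W \<inter> sphere 0 1 \<Longrightarrow> infdist w' V \<le> infdist w V"
    using subspace_gap_attained[OF subspace_onb_of[OF q] assms(3)] by blast
  have "Inf ((\<lambda>w. sqrt (1 - (infdist w V)\<^sup>2)) ` (W \<inter> sphere 0 1)) = sqrt (1 - (infdist w V)\<^sup>2)"
  proof (rule cInf_eq_minimum)
    show "sqrt (1 - (infdist w V)\<^sup>2) \<in> (\<lambda>w. sqrt (1 - (infdist w V)\<^sup>2)) ` (W \<inter> sphere 0 1)"
      using w(1) by blast
    fix t assume "t \<in> (\<lambda>w. sqrt (1 - (infdist w V)\<^sup>2)) ` (W \<inter> sphere 0 1)"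
    then obtain w' where "w' \<in> W \<inter> sphere 0 1" "t = sqrt (1 - (infdist w' V)\<^sup>2)"
      by blast
    moreover from this have "(infdist w' V)\<^sup>2 \<le> (infdist w V)\<^sup>2"
      using w(3) infdist_nonneg by (blast intro: power_mono)
    ultimately show "sqrt (1 - (infdist w V)\<^sup>2) \<le> t"
      by simp
  qed
  with w(2) show ?thesis
    by (simp add: sigma_min_eq_Inf_infdist[OF p q])
qed

lemma sub_angle_eq_arcsin_subspace_gap:
  fixes V W :: "(real^'n) set"
  assumes "subspace V" "subspace W" "dim W = dim V" "W \<noteq> {0}"
  shows "sub_angle V W = arcsin (subspace_gap W V)"
proof -
  have p: "onb_of (dim V) V (SOME p. onb_of (dim V) V p)"
    using someI_ex[OF onb_of_exists[OF assms(1)]] .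
  have q: "onb_of (dim V) W (SOME q. onb_of (dim V) W q)"
    using someI_ex[OF onb_of_exists[OF assms(2)]] assms(3) by simp
  have "0 \<le> subspace_gap W V" "subspace_gap W V \<le> 1"
    using subspace_gap_nonneg subspace_gap_le_1 assms by blast+
  then show ?thesis
    unfolding sub_angle_def sigma_min_eq_sqrt_subspace_gap[OF p q assms(4)]
    by (simp add: arcsin_arccos_sqrt_pos)
qed

section \<open>Matrices acting on the Grassmannian\<close>

lemma norm_matrix_vector_mult_le:
  fixes M :: "real^'n^'m"
  shows "norm (M *v x) \<le> norm M * norm x"
proof -
  have "norm (M *v x) = L2_set (\<lambda>i. \<bar>M $ i \<bullet> x\<bar>) UNIV"
    unfolding norm_vec_def by (simp add: matrix_vector_mul_component)
  also have "\<dots> \<le> L2_set (\<lambda>i. norm (M $ i) * norm x) UNIV"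
    by (intro L2_set_mono Cauchy_Schwarz_ineq2 abs_ge_zero)
  also have "\<dots> = norm M * norm x"
    unfolding norm_vec_def by (simp add: L2_set_left_distrib)
  finally show ?thesis .
qed

lemma matrix_inv_right:
  fixes M :: "'a::semiring_1^'n^'n"
  shows "invertible M \<Longrightarrow> M ** matrix_inv M = mat 1"
  unfolding invertible_def matrix_inv_def by (rule conjunct1[OF someI_ex])

lemma matrix_inv_left:
  fixes M :: "'a::semiring_1^'n^'n"
  shows "invertible M \<Longrightarrow> matrix_inv M ** M = mat 1"
  unfolding invertible_def matrix_inv_def by (rule conjunct2[OF someI_ex])

lemma invertible_matrix_inv:
  fixes M :: "'a::semiring_1^'n^'n"
  shows "invertible M \<Longrightarrow> invertible (matrix_inv M)"
  using matrix_inv_left matrix_inv_right invertible_def by blast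

lemma invertible_mat_1 [simp]: "invertible (mat 1 :: 'a::semiring_1^'n^'n)"
  unfolding invertible_def by auto

lemma norm_le_norm_matrix_inv_mult:
  fixes M :: "real^'n^'n"
  assumes "invertible M"
  shows "norm x \<le> norm (matrix_inv M) * norm (M *v x)"
  using norm_matrix_vector_mult_le[of "matrix_inv M" "M *v x"]
  by (simp add: matrix_vector_mul_assoc matrix_inv_left[OF assms])

lemma norm_le_perturbed_matrix_vector_mult:
  fixes M Q :: "real^'n^'n"
  assumes "invertible Q" "norm (M - Q) * norm (matrix_inv Q) \<le> 1 / 2"
  shows "norm x \<le> 2 * norm (matrix_inv Q) * norm (M *v x)"
proof -
  let ?c = "norm (matrix_inv Q)"
  have "Q *v x = M *v x - (M - Q) *v x"
    by (simp add: matrix_vector_mult_diff_rdistrib)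
  then have "norm (Q *v x) \<le> norm (M *v x) + norm (M - Q) * norm x"
    using norm_triangle_ineq4[of "M *v x" "(M - Q) *v x"] norm_matrix_vector_mult_le[of "M - Q" x]
    by simp
  then have "?c * norm (Q *v x) \<le> ?c * (norm (M *v x) + norm (M - Q) * norm x)"
    by (rule mult_left_mono) simp
  also have "\<dots> = ?c * norm (M *v x) + (norm (M - Q) * ?c) * norm x"
    by (simp add: algebra_simps)
  also have "\<dots> \<le> ?c * norm (M *v x) + 1 / 2 * norm x"
    using mult_right_mono[OF assms(2) norm_ge_zero] by simp
  finally have "norm x \<le> ?c * norm (M *v x) + 1 / 2 * norm x"
    using norm_le_norm_matrix_inv_mult[OF assms(1), of x] by linarith
  then show ?thesis
    by simp
qed

lemma mimage_mimage: "mimage M (mimage N V) = mimage (M ** N) V"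
  unfolding mimage_def by (auto simp: matrix_vector_mul_assoc image_image)

lemma mimage_mat_1 [simp]: "mimage (mat 1) V = V"
  by (simp add: mimage_def)

lemma mimage_scaleR_mat_1:
  fixes V :: "(real^'n) set"
  assumes "subspace V" "c \<noteq> 0"
  shows "mimage (c *\<^sub>R mat 1) V = V"
proof -
  have scale: "(c *\<^sub>R mat 1) *v x = c *\<^sub>R x" for x :: "real^'n"
    by (metis scaleR_matrix_vector_assoc matrix_vector_mul_lid)
  show ?thesis
    unfolding mimage_def scale
  proof
    show "(\<lambda>v. c *\<^sub>R v) ` V \<subseteq> V"
      using assms(1) by (auto simp: subspace_scale)
    show "V \<subseteq> (\<lambda>v. c *\<^sub>R v) ` V"
    proof
      fix v assume "v \<in> V"
      then have "v /\<^sub>R c \<in> V"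
        using assms(1) by (simp add: subspace_scale)
      moreover have "v = c *\<^sub>R (v /\<^sub>R c)"
        using assms(2) by simp
      ultimately show "v \<in> (\<lambda>v. c *\<^sub>R v) ` V"
        by blast
    qed
  qed
qed

lemma mimage_in_Grassmannian:
  fixes M :: "real^'n^'n"
  assumes "invertible M" "V \<in> Grassmannian s"
  shows "mimage M V \<in> Grassmannian s"
proof -
  have "linear ((*v) M)" "inj ((*v) M)"
    using assms(1) by (auto simp: matrix_vector_mul_linear inj_matrix_vector_mult)
  then show ?thesis
    using assms(2) unfolding Grassmannian_def mimage_def
    by (auto intro: linear_subspace_image dim_image_eq inj_on_subset)
qed

lemma mimage_Grassmannian:
  fixes M :: "real^'n^'n"
  assumes "invertible M"
  shows "mimage M ` Grassmannian s = Grassmannian s"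
proof (intro equalityI subsetI)
  fix V :: "(real^'n) set" assume "V \<in> Grassmannian s"
  moreover have "V = mimage M (mimage (matrix_inv M) V)"
    by (simp add: mimage_mimage matrix_inv_right[OF assms])
  ultimately show "V \<in> mimage M ` Grassmannian s"
    using mimage_in_Grassmannian[OF invertible_matrix_inv[OF assms]] by blast
qed (use mimage_in_Grassmannian[OF assms] in blast)

lemma Grassmannian_nonempty:
  assumes "s \<le> CARD('n)"
  shows "(Grassmannian s :: (real^'n) set set) \<noteq> {}"
proof -
  have "s \<le> dim (UNIV :: (real^'n) set)"
    using assms by simp
  then obtain V :: "(real^'n) set" where "subspace V" "dim V = s"
    using choose_subspace_of_subspace by blast
  then show ?thesis
    unfolding Grassmannian_def by blast
qed

lemma Grassmannian_nonzero:
  "V \<in> Grassmannian s \<Longrightarrow> 1 \<le> s \<Longrightarrow> V \<noteq> {0}"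
  unfolding Grassmannian_def by auto

lemma sub_angle_Grassmannian:
  assumes "X \<in> Grassmannian s" "Y \<in> Grassmannian s" "1 \<le> s"
  shows "sub_angle X Y = arcsin (subspace_gap Y X)"
    and "0 \<le> subspace_gap Y X" "subspace_gap Y X \<le> 1"
  using assms Grassmannian_nonzero[OF assms(2,3)]
  by (auto simp: Grassmannian_def sub_angle_eq_arcsin_subspace_gap
      intro: subspace_gap_nonneg subspace_gap_le_1)

lemma sub_angle_bounds:
  assumes "X \<in> Grassmannian s" "Y \<in> Grassmannian s" "1 \<le> s"
  shows "0 \<le> sub_angle X Y" "sub_angle X Y \<le> pi / 2"
  using sub_angle_Grassmannian[OF assms] arcsin_nonneg arcsin_ubound by auto

lemma sin_ge_minus_square_div_2: "t - t\<^sup>2 / 2 \<le> sin (t::real)"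
proof -
  have "\<bar>sin t - (\<Sum>m<2. sin_coeff m * t ^ m)\<bar> \<le> inverse (fact 2) * \<bar>t\<bar> ^ 2"
    by (rule Maclaurin_sin_bound)
  then have "\<bar>sin t - t\<bar> * 2 \<le> t * t"
    by (simp add: sin_coeff_def numeral_2_eq_2)
  moreover have "t - sin t \<le> \<bar>sin t - t\<bar>"
    by linarith
  ultimately show ?thesis
    by (simp add: power2_eq_square)
qed

lemma arcsin_le_4_mult:
  assumes "0 \<le> x" "x \<le> 1"
  shows "arcsin x \<le> 4 * x"
proof -
  define t where "t = arcsin x"
  have t: "0 \<le> t" "t \<le> pi / 2" "sin t = x"
    using assms arcsin_nonneg arcsin_ubound by (auto simp: t_def)
  show ?thesis
  proof (cases "t \<le> 1")
    case True
    then have "t\<^sup>2 \<le> t"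
      using t(1) by (simp add: power2_eq_square mult_left_le_one_le)
    then show ?thesis
      using sin_ge_minus_square_div_2[of t] t(3) t_def assms(1) by linarith
  next
    case False
    have "sin 1 \<le> sin t"
      using False t(2) pi_ge_two by (intro sin_monotone_2pi_le) auto
    moreover have "1 / 2 \<le> sin (1::real)"
      using sin_ge_minus_square_div_2[of 1] by simp
    moreover have "t \<le> 2"
      using t(2) pi_less_4 by simp
    ultimately show ?thesis
      using t(3) t_def by linarith
  qed
qed

lemma arcsin_ge_self:
  assumes "0 \<le> x" "x \<le> 1"
  shows "x \<le> arcsin x"
  using assms sin_x_le_x[of "arcsin x"] arcsin_nonneg by simp

lemma sub_angle_mimage_le:
  fixes M :: "real^'n^'n"
  assumes "invertible M" "\<And>x. norm x \<le> b * norm (M *v x)"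
    and "X \<in> Grassmannian s" "Y \<in> Grassmannian s" "1 \<le> s"
  shows "sub_angle (mimage M X) (mimage M Y) \<le> 4 * norm M * b * sub_angle X Y"
proof -
  let ?g = "subspace_gap Y X" and ?h = "subspace_gap (mimage M Y) (mimage M X)"
  have g: "sub_angle X Y = arcsin ?g" "0 \<le> ?g" "?g \<le> 1"
    using sub_angle_Grassmannian[OF assms(3-5)] by auto
  have h: "sub_angle (mimage M X) (mimage M Y) = arcsin ?h" "0 \<le> ?h" "?h \<le> 1"
    using sub_angle_Grassmannian[OF mimage_in_Grassmannian[OF assms(1,3)]
        mimage_in_Grassmannian[OF assms(1,4)] assms(5)] by auto
  have "1 \<le> b * norm (M *v axis k 1)"
    using assms(2)[of "axis k 1"] by simp
  then have "0 \<le> norm M * b"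
    using mult_nonpos_nonneg[of b "norm (M *v axis k 1)"] by (cases "b \<le> 0") auto
  have "sub_angle (mimage M X) (mimage M Y) \<le> 4 * ?h"
    using arcsin_le_4_mult[OF h(2,3)] h(1) by simp
  also have "?h \<le> norm M * b * ?g"
    unfolding mimage_def
    using assms(3,4) Grassmannian_nonzero[OF assms(4,5)]
    by (intro subspace_gap_linear_image_le)
      (auto simp: matrix_vector_mul_linear norm_matrix_vector_mult_le assms(2) Grassmannian_def)
  also have "\<dots> \<le> norm M * b * sub_angle X Y"
    unfolding g(1) by (rule mult_left_mono[OF arcsin_ge_self[OF g(2,3)] \<open>0 \<le> norm M * b\<close>])
  finally show ?thesis
    by (simp add: mult_ac)
qed

lemma subspace_gap_orthogonal_mimage_le:
  fixes Q :: "real^'n^'n"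
  assumes "orthogonal_matrix Q" "X \<in> Grassmannian s" "Y \<in> Grassmannian s" "1 \<le> s"
  shows "subspace_gap (mimage Q Y) (mimage Q X) \<le> subspace_gap Y X"
proof -
  have "norm (Q *v x) = norm x" for x
    using assms(1) orthogonal_transformation_matrix[of "(*v) Q"]
    by (simp add: matrix_vector_mul_linear orthogonal_transformation_norm)
  then have "subspace_gap (mimage Q Y) (mimage Q X) \<le> 1 * 1 * subspace_gap Y X"
    unfolding mimage_def using assms(2,3) Grassmannian_nonzero[OF assms(3,4)]
    by (intro subspace_gap_linear_image_le) (auto simp: matrix_vector_mul_linear Grassmannian_def)
  then show ?thesis
    by simp
qed

lemma sub_angle_orthogonal_mimage:
  fixes Q :: "real^'n^'n"
  assumes "orthogonal_matrix Q" "X \<in> Grassmannian s" "Y \<in> Grassmannian s" "1 \<le> s"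
  shows "sub_angle (mimage Q X) (mimage Q Y) = sub_angle X Y"
proof -
  have "invertible Q" "transpose Q ** Q = mat 1"
    using assms(1) by (auto simp: orthogonal_matrix_def invertible_def)
  then have "mimage Q X \<in> Grassmannian s" "mimage Q Y \<in> Grassmannian s"
    "mimage (transpose Q) (mimage Q X) = X" "mimage (transpose Q) (mimage Q Y) = Y"
    using assms(2,3) by (simp_all add: mimage_in_Grassmannian mimage_mimage)
  then have "subspace_gap (mimage Q Y) (mimage Q X) = subspace_gap Y X"
    using subspace_gap_orthogonal_mimage_le[of Q X s Y] assms
      subspace_gap_orthogonal_mimage_le[of "transpose Q" "mimage Q X" s "mimage Q Y"]
    by (simp add: antisym)
  then show ?thesis
    using sub_angle_Grassmannian(1) assms(2-4) \<open>mimage Q X \<in> Grassmannian s\<close>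
      \<open>mimage Q Y \<in> Grassmannian s\<close> by metis
qed

lemma subspace_gap_perturbed_mimage_le:
  fixes M N :: "real^'n^'n"
  assumes "\<And>x. norm x \<le> b * norm (M *v x)" "X \<in> Grassmannian s" "1 \<le> s"
  shows "subspace_gap (mimage M X) (mimage N X) \<le> norm (M - N) * b"
  unfolding mimage_def using assms Grassmannian_nonzero[OF assms(2,3)]
  by (intro subspace_gap_perturbed_linear_image_le)
    (auto simp: matrix_vector_mul_linear Grassmannian_def norm_matrix_vector_mult_le
      simp flip: matrix_vector_mult_diff_rdistrib)

lemma subspace_gap_perturbed_mimage_diff_le:
  fixes M N Q :: "real^'n^'n"
  assumes invertible: "invertible M" "invertible N" "invertible Q"
    and near: "(norm (M - Q) + norm (N - Q)) * norm (matrix_inv Q) \<le> 1 / 2"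
    and X: "X \<in> Grassmannian s" and Y: "Y \<in> Grassmannian s" and s: "1 \<le> s"
  shows "\<bar>subspace_gap (mimage N Y) (mimage M X) - subspace_gap (mimage Q Y) (mimage Q X)\<bar>
    \<le> 3 * norm (matrix_inv Q) * (norm (M - Q) + norm (N - Q))"
proof -
  let ?c = "norm (matrix_inv Q)"
  have "norm (M - Q) * ?c \<le> 1 / 2" "norm (N - Q) * ?c \<le> 1 / 2"
    using near mult_right_mono[of "norm (M - Q)" "norm (M - Q) + norm (N - Q)" ?c]
      mult_right_mono[of "norm (N - Q)" "norm (M - Q) + norm (N - Q)" ?c] by auto
  note lower = norm_le_perturbed_matrix_vector_mult[OF invertible(3) this(1)]
    norm_le_perturbed_matrix_vector_mult[OF invertible(3) this(2)]
    norm_le_norm_matrix_inv_mult[OF invertible(3)]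
  note perturb = subspace_gap_perturbed_mimage_le[OF _ _ s]
  have in_G: "mimage M X \<in> Grassmannian s" "mimage N Y \<in> Grassmannian s"
    "mimage Q X \<in> Grassmannian s" "mimage Q Y \<in> Grassmannian s"
    using invertible X Y by (simp_all add: mimage_in_Grassmannian)
  have "\<bar>subspace_gap (mimage N Y) (mimage M X) - subspace_gap (mimage Q Y) (mimage Q X)\<bar>
      \<le> subspace_gap (mimage N Y) (mimage Q Y) + subspace_gap (mimage Q Y) (mimage N Y)
        + subspace_gap (mimage M X) (mimage Q X) + subspace_gap (mimage Q X) (mimage M X)"
    using in_G Grassmannian_nonzero[OF _ s]
    by (intro subspace_gap_abs_diff_le) (simp_all add: Grassmannian_def)
  also have "\<dots> \<le> norm (N - Q) * (2 * ?c) + norm (Q - N) * ?c + norm (M - Q) * (2 * ?c) + norm (Q - M) * ?c"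
    using perturb[OF lower(2) Y, of Q] perturb[OF lower(3) Y, of N]
      perturb[OF lower(1) X, of Q] perturb[OF lower(3) X, of M]
    by (simp add: mult.assoc)
  also have "\<dots> = 3 * ?c * (norm (M - Q) + norm (N - Q))"
    by (simp add: norm_minus_commute algebra_simps)
  finally show ?thesis .
qed

lemma sub_angle_mimage_converging:
  fixes M N :: "nat \<Rightarrow> real^'n^'n"
  assumes invertible: "\<forall>j. invertible (M j)" "\<forall>j. invertible (N j)" "invertible Q"
    and lim: "M \<longlonglongrightarrow> Q" "N \<longlonglongrightarrow> Q" and s: "1 \<le> s" and "0 < \<epsilon>"
  shows "\<forall>\<^sub>F j in sequentially. \<forall>X\<in>Grassmannian s. \<forall>Y\<in>Grassmannian s.
    \<bar>sub_angle (mimage (M j) X) (mimage (N j) Y) - sub_angle (mimage Q X) (mimage Q Y)\<bar> \<le> \<epsilon>"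
proof -
  let ?c = "norm (matrix_inv Q)"
  define e where "e j = norm (M j - Q) + norm (N j - Q)" for j
  have "uniformly_continuous_on {-1..1} arcsin"
    by (rule compact_uniformly_continuous[OF continuous_on_arcsin' compact_Icc])
  then obtain \<delta> where "0 < \<delta>" and \<delta>: "\<forall>a\<in>{-1..1}. \<forall>b\<in>{-1..1}. dist b a < \<delta> \<longrightarrow> dist (arcsin b) (arcsin a) < \<epsilon>"
    using \<open>0 < \<epsilon>\<close> unfolding uniformly_continuous_on_def by metis
  have "e \<longlonglongrightarrow> 0"
    unfolding e_def using tendsto_add[OF tendsto_norm_zero[OF LIM_zero[OF lim(1)]]
      tendsto_norm_zero[OF LIM_zero[OF lim(2)]]] by simp
  have "\<forall>\<^sub>F j in sequentially. e j * ?c < 1 / 2"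
    using tendsto_mult_left_zero[OF \<open>e \<longlonglongrightarrow> 0\<close>] by (rule order_tendstoD(2)) simp
  moreover have "\<forall>\<^sub>F j in sequentially. 3 * ?c * e j < \<delta>"
    using tendsto_mult_right_zero[OF \<open>e \<longlonglongrightarrow> 0\<close>] \<open>0 < \<delta>\<close> by (rule order_tendstoD(2))
  ultimately have "\<forall>\<^sub>F j in sequentially. e j * ?c < 1 / 2 \<and> 3 * ?c * e j < \<delta>"
    by (rule eventually_conj)
  then show ?thesis
  proof (rule eventually_mono, intro ballI)
    fix j and X Y :: "(real^'n) set"
    assume j: "e j * ?c < 1 / 2 \<and> 3 * ?c * e j < \<delta>" and X: "X \<in> Grassmannian s" and Y: "Y \<in> Grassmannian s"
    have near: "(norm (M j - Q) + norm (N j - Q)) * ?c \<le> 1 / 2"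
      using j by (simp add: e_def)
    let ?g = "subspace_gap (mimage (N j) Y) (mimage (M j) X)"
      and ?g' = "subspace_gap (mimage Q Y) (mimage Q X)"
    from subspace_gap_perturbed_mimage_diff_le[OF invertible(1,2)[rule_format] invertible(3) near X Y s] j
    have "dist ?g ?g' < \<delta>"
      by (simp add: dist_real_def e_def)
    moreover note in_G = mimage_in_Grassmannian[OF invertible(1)[rule_format, of j] X]
      mimage_in_Grassmannian[OF invertible(2)[rule_format, of j] Y]
      mimage_in_Grassmannian[OF invertible(3) X] mimage_in_Grassmannian[OF invertible(3) Y]
    moreover have "?g \<in> {-1..1}" "?g' \<in> {-1..1}"
      using sub_angle_Grassmannian(2,3)[OF in_G(1,2) s] sub_angle_Grassmannian(2,3)[OF in_G(3,4) s]
      by auto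
    ultimately have "dist (arcsin ?g) (arcsin ?g') < \<epsilon>"
      using \<delta> by blast
    then show "\<bar>sub_angle (mimage (M j) X) (mimage (N j) Y) - sub_angle (mimage Q X) (mimage Q Y)\<bar> \<le> \<epsilon>"
      using sub_angle_Grassmannian(1)[OF in_G(1,2) s] sub_angle_Grassmannian(1)[OF in_G(3,4) s]
      by (simp add: dist_real_def)
  qed
qed

lemma sub_angle_mimage_comparable:
  fixes Q :: "real^'n^'n"
  assumes Q: "invertible Q" and X: "X \<in> Grassmannian s" and Y: "Y \<in> Grassmannian s" and s: "1 \<le> s"
  shows "sub_angle (mimage Q X) (mimage Q Y) \<le> 4 * norm Q * norm (matrix_inv Q) * sub_angle X Y"
    and "sub_angle X Y \<le> 4 * norm Q * norm (matrix_inv Q) * sub_angle (mimage Q X) (mimage Q Y)"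
proof -
  show "sub_angle (mimage Q X) (mimage Q Y) \<le> 4 * norm Q * norm (matrix_inv Q) * sub_angle X Y"
    by (rule sub_angle_mimage_le[OF Q norm_le_norm_matrix_inv_mult[OF Q] X Y s])
  have "norm x \<le> norm Q * norm (matrix_inv Q *v x)" for x
    using norm_matrix_vector_mult_le[of Q "matrix_inv Q *v x"]
    by (simp add: matrix_vector_mul_assoc matrix_inv_right[OF Q])
  from sub_angle_mimage_le[OF invertible_matrix_inv[OF Q] this
      mimage_in_Grassmannian[OF Q X] mimage_in_Grassmannian[OF Q Y] s]
  show "sub_angle X Y \<le> 4 * norm Q * norm (matrix_inv Q) * sub_angle (mimage Q X) (mimage Q Y)"
    by (simp add: mimage_mimage matrix_inv_left[OF Q] mult_ac)
qed

section \<open>Uniform Cesaro means and limit functionals\<close>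

lemma uniformly_eventually_mono:
  fixes P Q :: "real \<Rightarrow> 'b \<Rightarrow> 'a \<Rightarrow> bool"
  assumes "\<forall>\<epsilon>>0. \<forall>\<^sub>F j in F. \<forall>x\<in>S. P \<epsilon> j x"
    and "\<And>\<epsilon> j x. 0 < \<epsilon> \<Longrightarrow> x \<in> S \<Longrightarrow> P \<epsilon> j x \<Longrightarrow> Q \<epsilon> j x"
  shows "\<forall>\<epsilon>>0. \<forall>\<^sub>F j in F. \<forall>x\<in>S. Q \<epsilon> j x"
proof (intro allI impI)
  fix \<epsilon> :: real assume "0 < \<epsilon>"
  with assms(1) have "\<forall>\<^sub>F j in F. \<forall>x\<in>S. P \<epsilon> j x"
    by blast
  then show "\<forall>\<^sub>F j in F. \<forall>x\<in>S. Q \<epsilon> j x"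
    by (rule eventually_mono) (use assms(2) \<open>0 < \<epsilon>\<close> in blast)
qed

lemma uniformly_eventually_mono2:
  fixes P Q :: "real \<Rightarrow> 'b \<Rightarrow> 'a \<Rightarrow> 'a \<Rightarrow> bool"
  assumes "\<forall>\<epsilon>>0. \<forall>\<^sub>F j in F. \<forall>x\<in>S. \<forall>y\<in>S. P \<epsilon> j x y"
    and "\<And>\<epsilon> j x y. 0 < \<epsilon> \<Longrightarrow> x \<in> S \<Longrightarrow> y \<in> S \<Longrightarrow> P \<epsilon> j x y \<Longrightarrow> Q \<epsilon> j x y"
  shows "\<forall>\<epsilon>>0. \<forall>\<^sub>F j in F. \<forall>x\<in>S. \<forall>y\<in>S. Q \<epsilon> j x y"
proof (intro allI impI)
  fix \<epsilon> :: real assume "0 < \<epsilon>"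
  with assms(1) have "\<forall>\<^sub>F j in F. \<forall>x\<in>S. \<forall>y\<in>S. P \<epsilon> j x y"
    by blast
  then show "\<forall>\<^sub>F j in F. \<forall>x\<in>S. \<forall>y\<in>S. Q \<epsilon> j x y"
    by (rule eventually_mono) (use assms(2) \<open>0 < \<epsilon>\<close> in blast)
qed

lemma Cesaro_mean_uniformly_small:
  fixes d :: "'a \<Rightarrow> nat \<Rightarrow> real"
  assumes bounded: "\<And>V j. V \<in> S \<Longrightarrow> d V j \<le> B"
    and small: "\<forall>\<epsilon>>0. \<forall>\<^sub>F j in sequentially. \<forall>V\<in>S. d V j \<le> \<epsilon>"
  shows "\<forall>\<epsilon>>0. \<forall>\<^sub>F n in sequentially. \<forall>V\<in>S. (\<Sum>j<n. d V j) / real n \<le> \<epsilon>"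
proof (intro allI impI)
  fix \<epsilon> :: real assume "0 < \<epsilon>"
  obtain N where N: "\<And>j V. N \<le> j \<Longrightarrow> V \<in> S \<Longrightarrow> d V j \<le> \<epsilon> / 2"
    using small \<open>0 < \<epsilon>\<close> unfolding eventually_sequentially by (meson half_gt_zero)
  have "\<forall>\<^sub>F n in sequentially. 2 * real N * \<bar>B\<bar> / \<epsilon> \<le> real n \<and> N \<le> n \<and> 1 \<le> n"
    by (intro eventually_conj eventually_ge_at_top eventually_sequentiallyI[of "nat \<lceil>2 * real N * \<bar>B\<bar> / \<epsilon>\<rceil>"])
      linarith
  then show "\<forall>\<^sub>F n in sequentially. \<forall>V\<in>S. (\<Sum>j<n. d V j) / real n \<le> \<epsilon>"
  proof (rule eventually_mono, intro ballI)
    fix n V assume n: "2 * real N * \<bar>B\<bar> / \<epsilon> \<le> real n \<and> N \<le> n \<and> 1 \<le> n" and V: "V \<in> S"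
    have "d V j \<le> \<bar>B\<bar>" for j
      using bounded[OF V, of j] by linarith
    then have head: "(\<Sum>j<N. d V j) \<le> real N * \<bar>B\<bar>"
      using sum_bounded_above[of "{..<N}" "d V" "\<bar>B\<bar>"] by simp
    have "(\<Sum>j\<in>{N..<n}. d V j) \<le> real (n - N) * (\<epsilon> / 2)"
      using sum_bounded_above[of "{N..<n}" "d V" "\<epsilon> / 2"] N[OF _ V] by simp
    also have "\<dots> \<le> real n * (\<epsilon> / 2)"
      using \<open>0 < \<epsilon>\<close> by (intro mult_right_mono) auto
    finally have tail: "(\<Sum>j\<in>{N..<n}. d V j) \<le> real n * (\<epsilon> / 2)" .
    have "real N * \<bar>B\<bar> \<le> real n * (\<epsilon> / 2)"
      using n \<open>0 < \<epsilon>\<close> by (simp add: divide_le_eq mult.commute)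
    moreover have "(\<Sum>j<n. d V j) = (\<Sum>j<N. d V j) + (\<Sum>j\<in>{N..<n}. d V j)"
      using n by (metis atLeast0LessThan sum.atLeastLessThan_concat zero_le)
    ultimately have "(\<Sum>j<n. d V j) \<le> real n * \<epsilon>"
      using head tail by linarith
    then show "(\<Sum>j<n. d V j) / real n \<le> \<epsilon>"
      using n by (simp add: divide_le_eq mult.commute)
  qed
qed

lemma Limsup_Liminf_le_scaled:
  fixes x y :: "nat \<Rightarrow> ereal"
  assumes "0 \<le> C" "\<forall>\<epsilon>>0. \<forall>\<^sub>F n in sequentially. x n \<le> ereal C * y n + ereal \<epsilon>"
  shows "limsup x \<le> ereal C * limsup y" "liminf x \<le> ereal C * liminf y"
proof -
  show "limsup x \<le> ereal C * limsup y"
  proof (rule ereal_le_epsilon2)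
    fix \<epsilon> :: real assume "0 < \<epsilon>"
    then have "limsup x \<le> limsup (\<lambda>n. ereal C * y n + ereal \<epsilon>)"
      using assms(2) by (blast intro: Limsup_mono)
    also have "\<dots> = ereal C * limsup y + ereal \<epsilon>"
      using assms(1) by (simp add: Limsup_add_ereal_right Limsup_ereal_mult_left)
    finally show "limsup x \<le> ereal C * limsup y + ereal \<epsilon>" .
  qed
  show "liminf x \<le> ereal C * liminf y"
  proof (rule ereal_le_epsilon2)
    fix \<epsilon> :: real assume "0 < \<epsilon>"
    then have "liminf x \<le> liminf (\<lambda>n. ereal C * y n + ereal \<epsilon>)"
      using assms(2) by (blast intro: Liminf_mono)
    also have "\<dots> = ereal C * liminf y + ereal \<epsilon>"
      using assms(1) by (simp add: Liminf_add_ereal_right Liminf_ereal_mult_left)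
    finally show "liminf x \<le> ereal C * liminf y + ereal \<epsilon>" .
  qed
qed

lemma SUP_le_scaled_add:
  fixes x y :: "'a \<Rightarrow> ereal"
  assumes "0 \<le> C" "\<And>V. V \<in> S \<Longrightarrow> x V \<le> ereal C * y V + e"
  shows "(SUP V\<in>S. x V) \<le> ereal C * (SUP V\<in>S. y V) + e"
proof (rule SUP_least)
  fix V assume "V \<in> S"
  then have "ereal C * y V \<le> ereal C * (SUP V\<in>S. y V)"
    using assms(1) by (intro ereal_mult_left_mono SUP_upper) auto
  then have "ereal C * y V + e \<le> ereal C * (SUP V\<in>S. y V) + e"
    by (rule add_right_mono)
  with assms(2)[OF \<open>V \<in> S\<close>] show "x V \<le> ereal C * (SUP V\<in>S. y V) + e"
    by (rule order_trans)
qed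

lemma sup_lim_functionals_le_scaled:
  fixes f g :: "'a \<Rightarrow> nat \<Rightarrow> real"
  assumes "0 \<le> C" and le: "\<forall>\<epsilon>>0. \<forall>\<^sub>F n in sequentially. \<forall>V\<in>S. f V n \<le> C * g V n + \<epsilon>"
  shows "(SUP V\<in>S. limsup (\<lambda>n. ereal (f V n))) \<le> ereal C * (SUP V\<in>S. limsup (\<lambda>n. ereal (g V n)))"
    "(SUP V\<in>S. liminf (\<lambda>n. ereal (f V n))) \<le> ereal C * (SUP V\<in>S. liminf (\<lambda>n. ereal (g V n)))"
    "limsup (\<lambda>n. SUP V\<in>S. ereal (f V n)) \<le> ereal C * limsup (\<lambda>n. SUP V\<in>S. ereal (g V n))"
    "liminf (\<lambda>n. SUP V\<in>S. ereal (f V n)) \<le> ereal C * liminf (\<lambda>n. SUP V\<in>S. ereal (g V n))"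
proof -
  have pointwise: "\<forall>\<epsilon>>0. \<forall>\<^sub>F n in sequentially. ereal (f V n) \<le> ereal C * ereal (g V n) + ereal \<epsilon>"
    if "V \<in> S" for V
  proof (intro allI impI)
    fix \<epsilon> :: real assume "0 < \<epsilon>"
    from le[rule_format, OF this] show "\<forall>\<^sub>F n in sequentially. ereal (f V n) \<le> ereal C * ereal (g V n) + ereal \<epsilon>"
      by (rule eventually_mono) (drule bspec[OF _ that], simp)
  qed
  have uniform: "\<forall>\<epsilon>>0. \<forall>\<^sub>F n in sequentially.
      (SUP V\<in>S. ereal (f V n)) \<le> ereal C * (SUP V\<in>S. ereal (g V n)) + ereal \<epsilon>"
  proof (intro allI impI)
    fix \<epsilon> :: real assume "0 < \<epsilon>"
    from le[rule_format, OF this] show "\<forall>\<^sub>F n in sequentially.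
        (SUP V\<in>S. ereal (f V n)) \<le> ereal C * (SUP V\<in>S. ereal (g V n)) + ereal \<epsilon>"
      by (rule eventually_mono) (rule SUP_le_scaled_add[OF assms(1)], auto)
  qed
  have "(SUP V\<in>S. limsup (\<lambda>n. ereal (f V n))) \<le> ereal C * (SUP V\<in>S. limsup (\<lambda>n. ereal (g V n))) + 0"
    by (rule SUP_le_scaled_add[OF assms(1)]) (simp add: Limsup_Liminf_le_scaled(1)[OF assms(1) pointwise])
  then show "(SUP V\<in>S. limsup (\<lambda>n. ereal (f V n))) \<le> ereal C * (SUP V\<in>S. limsup (\<lambda>n. ereal (g V n)))"
    by simp
  have "(SUP V\<in>S. liminf (\<lambda>n. ereal (f V n))) \<le> ereal C * (SUP V\<in>S. liminf (\<lambda>n. ereal (g V n))) + 0"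
    by (rule SUP_le_scaled_add[OF assms(1)]) (simp add: Limsup_Liminf_le_scaled(2)[OF assms(1) pointwise])
  then show "(SUP V\<in>S. liminf (\<lambda>n. ereal (f V n))) \<le> ereal C * (SUP V\<in>S. liminf (\<lambda>n. ereal (g V n)))"
    by simp
  show "limsup (\<lambda>n. SUP V\<in>S. ereal (f V n)) \<le> ereal C * limsup (\<lambda>n. SUP V\<in>S. ereal (g V n))"
    by (rule Limsup_Liminf_le_scaled(1)[OF assms(1) uniform])
  show "liminf (\<lambda>n. SUP V\<in>S. ereal (f V n)) \<le> ereal C * liminf (\<lambda>n. SUP V\<in>S. ereal (g V n))"
    by (rule Limsup_Liminf_le_scaled(2)[OF assms(1) uniform])
qed

lemma sup_lim_functionals_nonneg:
  fixes f :: "'a \<Rightarrow> nat \<Rightarrow> real"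
  assumes "S \<noteq> {}" "\<And>V n. V \<in> S \<Longrightarrow> 0 \<le> f V n"
  shows "0 \<le> (SUP V\<in>S. limsup (\<lambda>n. ereal (f V n)))" "0 \<le> (SUP V\<in>S. liminf (\<lambda>n. ereal (f V n)))"
    "0 \<le> limsup (\<lambda>n. SUP V\<in>S. ereal (f V n))" "0 \<le> liminf (\<lambda>n. SUP V\<in>S. ereal (f V n))"
proof -
  have lim: "0 \<le> liminf x" "0 \<le> limsup x" if "\<And>n. 0 \<le> x n" for x :: "nat \<Rightarrow> ereal"
  proof -
    show "0 \<le> liminf x"
      by (rule Liminf_bounded) (simp add: that)
    moreover have "liminf x \<le> limsup x"
      by (rule Liminf_le_Limsup) simp
    ultimately show "0 \<le> limsup x"
      by (rule order_trans)
  qed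
  obtain V where V: "V \<in> S"
    using assms(1) by blast
  have fV: "0 \<le> ereal (f V n)" for n
    using assms(2)[OF V] by simp
  show "0 \<le> (SUP V\<in>S. limsup (\<lambda>n. ereal (f V n)))"
    using lim(2)[OF fV] by (rule SUP_upper2[OF V])
  show "0 \<le> (SUP V\<in>S. liminf (\<lambda>n. ereal (f V n)))"
    using lim(1)[OF fV] by (rule SUP_upper2[OF V])
  have sup: "0 \<le> (SUP V\<in>S. ereal (f V n))" for n
    using fV by (rule SUP_upper2[OF V])
  show "0 \<le> limsup (\<lambda>n. SUP V\<in>S. ereal (f V n))" "0 \<le> liminf (\<lambda>n. SUP V\<in>S. ereal (f V n))"
    using lim[of "\<lambda>n. SUP V\<in>S. ereal (f V n)", OF sup] by blast+
qed

lemma ereal_eq_0_iff_if_mutually_bounded: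
  fixes x y :: ereal
  assumes "0 \<le> x" "0 \<le> y" "x \<le> ereal C * y" "y \<le> ereal C * x"
  shows "x = 0 \<longleftrightarrow> y = 0"
proof
  assume "x = 0"
  then have "y \<le> 0"
    using assms(4) by simp
  then show "y = 0"
    using assms(2) by (rule order_antisym)
next
  assume "y = 0"
  then have "x \<le> 0"
    using assms(3) by simp
  then show "x = 0"
    using assms(1) by (rule order_antisym)
qed

section \<open>Angular values of conjugated systems\<close>

lemma invertible_Phi:
  assumes "\<forall>n. invertible (A n)"
  shows "invertible (Phi A j m)"
  using assms by (induction j) (auto simp: invertible_mult)

lemma Phi_conj:
  fixes A Qs :: "nat \<Rightarrow> real^'n^'n"
  assumes "\<forall>n. invertible (Qs n)"
  shows "Phi (\<lambda>n. Qs (Suc n) ** A n ** matrix_inv (Qs n)) j 0 = Qs j ** Phi A j 0 ** matrix_inv (Qs 0)"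
proof (induction j)
  case 0
  show ?case
    using matrix_inv_right[of "Qs 0"] assms by simp
next
  case (Suc j)
  have "matrix_inv (Qs j) ** (Qs j ** P) = P" for P :: "real^'n^'n"
    using matrix_inv_left[of "Qs j"] assms by (simp add: matrix_mul_assoc)
  then show ?case
    using Suc by (simp flip: matrix_mul_assoc)
qed

definition angle_step :: "(nat \<Rightarrow> real^'n^'n) \<Rightarrow> (real^'n) set \<Rightarrow> nat \<Rightarrow> real" where
  "angle_step A V j = sub_angle (mimage (Phi A j 0) V) (mimage (Phi A (Suc j) 0) V)"

lemma a1n_eq_sum_angle_step: "a1n A n V = (\<Sum>j<n. angle_step A V j)"
  unfolding a1n_def angle_step_def by (simp add: sum.atLeast1_atMost_eq)

lemma angle_step_bounds:
  assumes "\<forall>n. invertible (A n)" "V \<in> Grassmannian s" "1 \<le> s"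
  shows "0 \<le> angle_step A V j" "angle_step A V j \<le> pi / 2"
  unfolding angle_step_def
  using sub_angle_bounds[OF mimage_in_Grassmannian[OF invertible_Phi[OF assms(1)] assms(2)]
      mimage_in_Grassmannian[OF invertible_Phi[OF assms(1)] assms(2)] assms(3)]
  by blast+

lemma angle_step_conj:
  fixes A Qs :: "nat \<Rightarrow> real^'n^'n"
  assumes "\<forall>n. invertible (Qs n)"
  shows "angle_step (\<lambda>n. Qs (Suc n) ** A n ** matrix_inv (Qs n)) (mimage (Qs 0) V) j
    = sub_angle (mimage (Qs j) (mimage (Phi A j 0) V)) (mimage (Qs (Suc j)) (mimage (Phi A (Suc j) 0) V))"
proof -
  have "Qs i ** Phi A i 0 ** matrix_inv (Qs 0) ** Qs 0 = Qs i ** Phi A i 0" for i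
    using matrix_inv_left[of "Qs 0"] assms by (simp flip: matrix_mul_assoc)
  then have "mimage (Phi (\<lambda>n. Qs (Suc n) ** A n ** matrix_inv (Qs n)) i 0) (mimage (Qs 0) V)
      = mimage (Qs i) (mimage (Phi A i 0) V)" for i
    by (simp add: Phi_conj[OF assms] mimage_mimage)
  then show ?thesis
    unfolding angle_step_def by (simp only:)
qed

lemma angular_values_reindex:
  fixes A :: "nat \<Rightarrow> real^'n^'n"
  assumes "invertible P"
  shows "theta_sup_limsup s A = (SUP V\<in>Grassmannian s. limsup (\<lambda>n. ereal (a1n A n (mimage P V) / real n)))"
    "theta_sup_liminf s A = (SUP V\<in>Grassmannian s. liminf (\<lambda>n. ereal (a1n A n (mimage P V) / real n)))"
    "theta_limsup_sup s A = limsup (\<lambda>n. SUP V\<in>Grassmannian s. ereal (a1n A n (mimage P V) / real n))"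
    "theta_liminf_sup s A = liminf (\<lambda>n. SUP V\<in>Grassmannian s. ereal (a1n A n (mimage P V) / real n))"
proof -
  have reindex: "(SUP V\<in>Grassmannian s. \<phi> V) = (SUP V\<in>Grassmannian s. \<phi> (mimage P V))"
    for \<phi> :: "_ \<Rightarrow> ereal"
    using mimage_Grassmannian[OF assms, of s] by (metis image_image)
  show "theta_sup_limsup s A = (SUP V\<in>Grassmannian s. limsup (\<lambda>n. ereal (a1n A n (mimage P V) / real n)))"
    unfolding theta_sup_limsup_def by (rule reindex)
  show "theta_sup_liminf s A = (SUP V\<in>Grassmannian s. liminf (\<lambda>n. ereal (a1n A n (mimage P V) / real n)))"
    unfolding theta_sup_liminf_def by (rule reindex)
  show "theta_limsup_sup s A = limsup (\<lambda>n. SUP V\<in>Grassmannian s. ereal (a1n A n (mimage P V) / real n))"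
    unfolding theta_limsup_sup_def by (rule arg_cong[where f = limsup], rule ext, rule reindex)
  show "theta_liminf_sup s A = liminf (\<lambda>n. SUP V\<in>Grassmannian s. ereal (a1n A n (mimage P V) / real n))"
    unfolding theta_liminf_sup_def by (rule arg_cong[where f = liminf], rule ext, rule reindex)
qed

lemma angular_values_le_scaled:
  fixes A B :: "nat \<Rightarrow> real^'n^'n"
  assumes A: "\<forall>n. invertible (A n)" and B: "\<forall>n. invertible (B n)"
    and P: "invertible P" and R: "invertible R" and s: "1 \<le> s" and "0 \<le> C"
    and steps: "\<forall>\<epsilon>>0. \<forall>\<^sub>F j in sequentially. \<forall>V\<in>Grassmannian s.
      angle_step B (mimage P V) j \<le> C * angle_step A (mimage R V) j + \<epsilon>"
  shows "theta_sup_limsup s B \<le> ereal C * theta_sup_limsup s A"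
    "theta_sup_liminf s B \<le> ereal C * theta_sup_liminf s A"
    "theta_limsup_sup s B \<le> ereal C * theta_limsup_sup s A"
    "theta_liminf_sup s B \<le> ereal C * theta_liminf_sup s A"
proof -
  define d where "d V j = angle_step B (mimage P V) j - C * angle_step A (mimage R V) j" for V j
  have "d V j \<le> pi / 2" if "V \<in> Grassmannian s" for V j
  proof -
    have "0 \<le> C * angle_step A (mimage R V) j"
      using angle_step_bounds[OF A mimage_in_Grassmannian[OF R that] s] \<open>0 \<le> C\<close> by simp
    then show ?thesis
      using angle_step_bounds(2)[OF B mimage_in_Grassmannian[OF P that] s, of j]
      unfolding d_def by linarith
  qed
  moreover have "\<forall>\<epsilon>>0. \<forall>\<^sub>F j in sequentially. \<forall>V\<in>Grassmannian s. d V j \<le> \<epsilon>"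
    using steps by (rule uniformly_eventually_mono) (unfold d_def, linarith)
  ultimately have small: "\<forall>\<epsilon>>0. \<forall>\<^sub>F n in sequentially. \<forall>V\<in>Grassmannian s.
      (\<Sum>j<n. d V j) / real n \<le> \<epsilon>"
    by (rule Cesaro_mean_uniformly_small)
  have "a1n B n (mimage P V) / real n \<le> C * (a1n A n (mimage R V) / real n) + \<epsilon>"
    if "(\<Sum>j<n. d V j) / real n \<le> \<epsilon>" for n V \<epsilon>
  proof -
    have "(\<Sum>j<n. d V j) / real n = a1n B n (mimage P V) / real n - C * (a1n A n (mimage R V) / real n)"
      by (simp add: d_def a1n_eq_sum_angle_step sum_subtractf sum_distrib_left diff_divide_distrib)
    with that show ?thesis
      by linarith
  qed
  with small have means: "\<forall>\<epsilon>>0. \<forall>\<^sub>F n in sequentially. \<forall>V\<in>Grassmannian s.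
      a1n B n (mimage P V) / real n \<le> C * (a1n A n (mimage R V) / real n) + \<epsilon>"
    by (rule uniformly_eventually_mono)
  from sup_lim_functionals_le_scaled[OF \<open>0 \<le> C\<close> means] show
    "theta_sup_limsup s B \<le> ereal C * theta_sup_limsup s A"
    "theta_sup_liminf s B \<le> ereal C * theta_sup_liminf s A"
    "theta_limsup_sup s B \<le> ereal C * theta_limsup_sup s A"
    "theta_liminf_sup s B \<le> ereal C * theta_liminf_sup s A"
    unfolding angular_values_reindex[OF P, where A = B] angular_values_reindex[OF R, where A = A] .
qed

lemma angular_values_nonneg:
  fixes A :: "nat \<Rightarrow> real^'n^'n"
  assumes "\<forall>n. invertible (A n)" "1 \<le> s" "s \<le> CARD('n)"
  shows "0 \<le> theta_sup_limsup s A" "0 \<le> theta_sup_liminf s A"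
    "0 \<le> theta_limsup_sup s A" "0 \<le> theta_liminf_sup s A"
proof -
  have "0 \<le> a1n A n V / real n" if "V \<in> Grassmannian s" for V n
    unfolding a1n_eq_sum_angle_step
    using angle_step_bounds[OF assms(1) that assms(2)] by (simp add: sum_nonneg)
  note nonneg = sup_lim_functionals_nonneg[OF Grassmannian_nonempty[OF assms(3)], of "\<lambda>V n. a1n A n V / real n", OF this]
  show "0 \<le> theta_sup_limsup s A" "0 \<le> theta_sup_liminf s A"
    "0 \<le> theta_limsup_sup s A" "0 \<le> theta_liminf_sup s A"
    unfolding theta_sup_limsup_def theta_sup_liminf_def theta_limsup_sup_def theta_liminf_sup_def
    using nonneg by simp_all
qed

lemma angle_step_conj_eventually:
  fixes A Qs :: "nat \<Rightarrow> real^'n^'n" and rel :: "real \<Rightarrow> real \<Rightarrow> real \<Rightarrow> bool"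
  assumes A: "\<forall>n. invertible (A n)" and Q: "\<forall>n. invertible (Qs n)"
    and steps: "\<forall>\<epsilon>>0. \<forall>\<^sub>F j in sequentially. \<forall>X\<in>Grassmannian s. \<forall>Y\<in>Grassmannian s.
      rel \<epsilon> (sub_angle (mimage (Qs j) X) (mimage (Qs (Suc j)) Y)) (sub_angle X Y)"
  shows "\<forall>\<epsilon>>0. \<forall>\<^sub>F j in sequentially. \<forall>V\<in>Grassmannian s.
    rel \<epsilon> (angle_step (\<lambda>n. Qs (Suc n) ** A n ** matrix_inv (Qs n)) (mimage (Qs 0) V) j) (angle_step A V j)"
proof (intro allI impI)
  fix \<epsilon> :: real assume "0 < \<epsilon>"
  from steps[rule_format, OF this] show "\<forall>\<^sub>F j in sequentially. \<forall>V\<in>Grassmannian s.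
      rel \<epsilon> (angle_step (\<lambda>n. Qs (Suc n) ** A n ** matrix_inv (Qs n)) (mimage (Qs 0) V) j) (angle_step A V j)"
  proof (rule eventually_mono, intro ballI)
    fix j and V :: "(real^'n) set"
    assume "\<forall>X\<in>Grassmannian s. \<forall>Y\<in>Grassmannian s.
        rel \<epsilon> (sub_angle (mimage (Qs j) X) (mimage (Qs (Suc j)) Y)) (sub_angle X Y)"
      and "V \<in> Grassmannian s"
    then show "rel \<epsilon> (angle_step (\<lambda>n. Qs (Suc n) ** A n ** matrix_inv (Qs n)) (mimage (Qs 0) V) j)
        (angle_step A V j)"
      unfolding angle_step_conj[OF Q] unfolding angle_step_def
      using mimage_in_Grassmannian[OF invertible_Phi[OF A]] by blast
  qed
qed

lemma angular_values_conj_le_scaled: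
  fixes A Qs :: "nat \<Rightarrow> real^'n^'n"
  assumes A: "\<forall>n. invertible (A n)" and Q: "\<forall>n. invertible (Qs n)" and s: "1 \<le> s" and "0 \<le> C"
    and comparable: "\<forall>\<epsilon>>0. \<forall>\<^sub>F j in sequentially. \<forall>X\<in>Grassmannian s. \<forall>Y\<in>Grassmannian s.
      sub_angle (mimage (Qs j) X) (mimage (Qs (Suc j)) Y) \<le> C * sub_angle X Y + \<epsilon> \<and>
      sub_angle X Y \<le> C * sub_angle (mimage (Qs j) X) (mimage (Qs (Suc j)) Y) + \<epsilon>"
  defines "At \<equiv> \<lambda>n. Qs (Suc n) ** A n ** matrix_inv (Qs n)"
  shows "theta_sup_limsup s At \<le> ereal C * theta_sup_limsup s A"
    "theta_sup_liminf s At \<le> ereal C * theta_sup_liminf s A"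
    "theta_limsup_sup s At \<le> ereal C * theta_limsup_sup s A"
    "theta_liminf_sup s At \<le> ereal C * theta_liminf_sup s A"
    and "theta_sup_limsup s A \<le> ereal C * theta_sup_limsup s At"
    "theta_sup_liminf s A \<le> ereal C * theta_sup_liminf s At"
    "theta_limsup_sup s A \<le> ereal C * theta_limsup_sup s At"
    "theta_liminf_sup s A \<le> ereal C * theta_liminf_sup s At"
proof -
  have At: "\<forall>n. invertible (At n)"
    using A Q by (simp add: At_def invertible_mult invertible_matrix_inv)
  have steps: "\<forall>\<epsilon>>0. \<forall>\<^sub>F j in sequentially. \<forall>V\<in>Grassmannian s.
      angle_step At (mimage (Qs 0) V) j \<le> C * angle_step A V j + \<epsilon> \<and>
      angle_step A V j \<le> C * angle_step At (mimage (Qs 0) V) j + \<epsilon>"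
    unfolding At_def
    by (rule angle_step_conj_eventually[OF A Q, where rel = "\<lambda>\<epsilon> t a. t \<le> C * a + \<epsilon> \<and> a \<le> C * t + \<epsilon>",
          OF comparable])
  have "\<forall>\<epsilon>>0. \<forall>\<^sub>F j in sequentially. \<forall>V\<in>Grassmannian s.
      angle_step At (mimage (Qs 0) V) j \<le> C * angle_step A (mimage (mat 1) V) j + \<epsilon>"
    "\<forall>\<epsilon>>0. \<forall>\<^sub>F j in sequentially. \<forall>V\<in>Grassmannian s.
      angle_step A (mimage (mat 1) V) j \<le> C * angle_step At (mimage (Qs 0) V) j + \<epsilon>"
    using steps by (rule uniformly_eventually_mono, simp)+
  from angular_values_le_scaled[OF A At _ _ s \<open>0 \<le> C\<close> this(1)]
    angular_values_le_scaled[OF At A _ _ s \<open>0 \<le> C\<close> this(2)] Q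
  show "theta_sup_limsup s At \<le> ereal C * theta_sup_limsup s A"
    "theta_sup_liminf s At \<le> ereal C * theta_sup_liminf s A"
    "theta_limsup_sup s At \<le> ereal C * theta_limsup_sup s A"
    "theta_liminf_sup s At \<le> ereal C * theta_liminf_sup s A"
    and "theta_sup_limsup s A \<le> ereal C * theta_sup_limsup s At"
    "theta_sup_liminf s A \<le> ereal C * theta_sup_liminf s At"
    "theta_limsup_sup s A \<le> ereal C * theta_limsup_sup s At"
    "theta_liminf_sup s A \<le> ereal C * theta_liminf_sup s At"
    by simp_all
qed

lemma angular_values_conj_eq:
  fixes A Qs :: "nat \<Rightarrow> real^'n^'n"
  assumes A: "\<forall>n. invertible (A n)" and Q: "\<forall>n. invertible (Qs n)" and s: "1 \<le> s"
    and close: "\<forall>\<epsilon>>0. \<forall>\<^sub>F j in sequentially. \<forall>X\<in>Grassmannian s. \<forall>Y\<in>Grassmannian s.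
      \<bar>sub_angle (mimage (Qs j) X) (mimage (Qs (Suc j)) Y) - sub_angle X Y\<bar> \<le> \<epsilon>"
  defines "At \<equiv> \<lambda>n. Qs (Suc n) ** A n ** matrix_inv (Qs n)"
  shows "theta_sup_limsup s A = theta_sup_limsup s At \<and> theta_sup_liminf s A = theta_sup_liminf s At \<and>
    theta_limsup_sup s A = theta_limsup_sup s At \<and> theta_liminf_sup s A = theta_liminf_sup s At"
proof -
  have "\<forall>\<epsilon>>0. \<forall>\<^sub>F j in sequentially. \<forall>X\<in>Grassmannian s. \<forall>Y\<in>Grassmannian s.
      sub_angle (mimage (Qs j) X) (mimage (Qs (Suc j)) Y) \<le> 1 * sub_angle X Y + \<epsilon> \<and>
      sub_angle X Y \<le> 1 * sub_angle (mimage (Qs j) X) (mimage (Qs (Suc j)) Y) + \<epsilon>"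
    using close by (rule uniformly_eventually_mono2) (auto simp: abs_le_iff)
  note le = angular_values_conj_le_scaled[OF A Q s zero_le_one this]
  show ?thesis
    unfolding At_def using le by (intro conjI order_antisym) (simp_all flip: one_ereal_def)
qed

lemma angular_values_conj_zero_iff:
  fixes A Qs :: "nat \<Rightarrow> real^'n^'n"
  assumes A: "\<forall>n. invertible (A n)" and Q: "\<forall>n. invertible (Qs n)"
    and s: "1 \<le> s" "s \<le> CARD('n)" and "0 \<le> C"
    and comparable: "\<forall>\<epsilon>>0. \<forall>\<^sub>F j in sequentially. \<forall>X\<in>Grassmannian s. \<forall>Y\<in>Grassmannian s.
      sub_angle (mimage (Qs j) X) (mimage (Qs (Suc j)) Y) \<le> C * sub_angle X Y + \<epsilon> \<and>
      sub_angle X Y \<le> C * sub_angle (mimage (Qs j) X) (mimage (Qs (Suc j)) Y) + \<epsilon>"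
  shows "(theta_sup_limsup s A = 0 \<longleftrightarrow> theta_sup_limsup s (\<lambda>n. Qs (Suc n) ** A n ** matrix_inv (Qs n)) = 0) \<and>
    (theta_sup_liminf s A = 0 \<longleftrightarrow> theta_sup_liminf s (\<lambda>n. Qs (Suc n) ** A n ** matrix_inv (Qs n)) = 0) \<and>
    (theta_limsup_sup s A = 0 \<longleftrightarrow> theta_limsup_sup s (\<lambda>n. Qs (Suc n) ** A n ** matrix_inv (Qs n)) = 0) \<and>
    (theta_liminf_sup s A = 0 \<longleftrightarrow> theta_liminf_sup s (\<lambda>n. Qs (Suc n) ** A n ** matrix_inv (Qs n)) = 0)"
proof -
  have "\<forall>n. invertible (Qs (Suc n) ** A n ** matrix_inv (Qs n))"
    using A Q by (simp add: invertible_mult invertible_matrix_inv)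
  note nonneg = angular_values_nonneg[OF A s] angular_values_nonneg[OF this s]
  note le = angular_values_conj_le_scaled[OF A Q s(1) \<open>0 \<le> C\<close> comparable]
  show ?thesis
    using ereal_eq_0_iff_if_mutually_bounded[OF nonneg(1) nonneg(5) le(5) le(1)]
      ereal_eq_0_iff_if_mutually_bounded[OF nonneg(2) nonneg(6) le(6) le(2)]
      ereal_eq_0_iff_if_mutually_bounded[OF nonneg(3) nonneg(7) le(7) le(3)]
      ereal_eq_0_iff_if_mutually_bounded[OF nonneg(4) nonneg(8) le(8) le(4)]
    by blast
qed

lemma sub_angle_mimage_steps_converging:
  fixes Qs :: "nat \<Rightarrow> real^'n^'n"
  assumes Q: "\<forall>n. invertible (Qs n)" and lim: "Qs \<longlonglongrightarrow> Q" and "invertible Q" and s: "1 \<le> s"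
  shows "\<forall>\<epsilon>>0. \<forall>\<^sub>F j in sequentially. \<forall>X\<in>Grassmannian s. \<forall>Y\<in>Grassmannian s.
    \<bar>sub_angle (mimage (Qs j) X) (mimage (Qs (Suc j)) Y) - sub_angle (mimage Q X) (mimage Q Y)\<bar> \<le> \<epsilon>"
  using sub_angle_mimage_converging[OF Q _ \<open>invertible Q\<close> lim LIMSEQ_Suc[OF lim] s] Q by blast

lemma sub_angle_mimage_steps_close:
  fixes Qs :: "nat \<Rightarrow> real^'n^'n"
  assumes Q: "\<forall>n. invertible (Qs n)" and lim: "Qs \<longlonglongrightarrow> Q" and orth: "orthogonal_matrix Q" and s: "1 \<le> s"
  shows "\<forall>\<epsilon>>0. \<forall>\<^sub>F j in sequentially. \<forall>X\<in>Grassmannian s. \<forall>Y\<in>Grassmannian s.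
    \<bar>sub_angle (mimage (Qs j) X) (mimage (Qs (Suc j)) Y) - sub_angle X Y\<bar> \<le> \<epsilon>"
proof -
  have "invertible Q"
    using orth by (auto simp: orthogonal_matrix_def invertible_def)
  from sub_angle_mimage_steps_converging[OF Q lim this s] show ?thesis
    by (rule uniformly_eventually_mono2) (simp add: sub_angle_orthogonal_mimage[OF orth _ _ s])
qed

lemma sub_angle_mimage_steps_comparable:
  fixes Qs :: "nat \<Rightarrow> real^'n^'n"
  assumes Q: "\<forall>n. invertible (Qs n)" and lim: "Qs \<longlonglongrightarrow> Q" and "invertible Q" and s: "1 \<le> s"
  defines "C \<equiv> 4 * norm Q * norm (matrix_inv Q)"
  shows "\<forall>\<epsilon>>0. \<forall>\<^sub>F j in sequentially. \<forall>X\<in>Grassmannian s. \<forall>Y\<in>Grassmannian s.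
    sub_angle (mimage (Qs j) X) (mimage (Qs (Suc j)) Y) \<le> C * sub_angle X Y + \<epsilon> \<and>
    sub_angle X Y \<le> C * sub_angle (mimage (Qs j) X) (mimage (Qs (Suc j)) Y) + \<epsilon>"
proof -
  have "0 \<le> C"
    by (simp add: C_def)
  note converging = sub_angle_mimage_steps_converging[OF Q lim \<open>invertible Q\<close> s]
  have "\<forall>\<epsilon>>0. \<forall>\<^sub>F j in sequentially. \<forall>X\<in>Grassmannian s. \<forall>Y\<in>Grassmannian s.
      \<bar>sub_angle (mimage (Qs j) X) (mimage (Qs (Suc j)) Y) - sub_angle (mimage Q X) (mimage Q Y)\<bar>
        \<le> \<epsilon> / (C + 1)"
  proof (intro allI impI)
    fix \<epsilon> :: real assume "0 < \<epsilon>"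
    then show "\<forall>\<^sub>F j in sequentially. \<forall>X\<in>Grassmannian s. \<forall>Y\<in>Grassmannian s.
        \<bar>sub_angle (mimage (Qs j) X) (mimage (Qs (Suc j)) Y) - sub_angle (mimage Q X) (mimage Q Y)\<bar>
          \<le> \<epsilon> / (C + 1)"
      using converging[rule_format, of "\<epsilon> / (C + 1)"] \<open>0 \<le> C\<close> by simp
  qed
  then show ?thesis
  proof (rule uniformly_eventually_mono2)
    fix \<epsilon> :: real and j and X Y :: "(real^'n) set"
    let ?t = "sub_angle (mimage (Qs j) X) (mimage (Qs (Suc j)) Y)"
      and ?q = "sub_angle (mimage Q X) (mimage Q Y)"
    assume "0 < \<epsilon>" "X \<in> Grassmannian s" "Y \<in> Grassmannian s" and close: "\<bar>?t - ?q\<bar> \<le> \<epsilon> / (C + 1)"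
    then have "?q \<le> C * sub_angle X Y" "sub_angle X Y \<le> C * ?q"
      using sub_angle_mimage_comparable[OF \<open>invertible Q\<close> _ _ s] unfolding C_def by blast+
    moreover have "C * (\<epsilon> / (C + 1)) \<le> \<epsilon>" "\<epsilon> / (C + 1) \<le> \<epsilon>"
      using \<open>0 < \<epsilon>\<close> \<open>0 \<le> C\<close> by (simp_all add: field_simps)
    moreover have "C * ?q \<le> C * (?t + \<epsilon> / (C + 1))"
      using close \<open>0 \<le> C\<close> by (intro mult_left_mono) auto
    ultimately show "?t \<le> C * sub_angle X Y + \<epsilon> \<and> sub_angle X Y \<le> C * ?t + \<epsilon>"
      using close by (simp add: distrib_left)
  qed
qed

lemma angular_values_conj_scalar:
  fixes A Qs :: "nat \<Rightarrow> real^'n^'n" and q :: "nat \<Rightarrow> real"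
  assumes A: "\<forall>n. invertible (A n)" and Q: "\<forall>n. invertible (Qs n)" and s: "1 \<le> s"
    and q: "\<forall>n. q n \<noteq> 0 \<and> Qs n = q n *\<^sub>R mat 1"
  defines "At \<equiv> \<lambda>n. Qs (Suc n) ** A n ** matrix_inv (Qs n)"
  shows "theta_sup_limsup s A = theta_sup_limsup s At \<and> theta_sup_liminf s A = theta_sup_liminf s At \<and>
    theta_limsup_sup s A = theta_limsup_sup s At \<and> theta_liminf_sup s A = theta_liminf_sup s At"
proof -
  have "sub_angle (mimage (Qs j) X) (mimage (Qs (Suc j)) Y) = sub_angle X Y"
    if "X \<in> Grassmannian s" "Y \<in> Grassmannian s" for j X Y
    using that q by (simp add: Grassmannian_def mimage_scaleR_mat_1)
  then show ?thesis
    unfolding At_def by (intro angular_values_conj_eq[OF A Q s]) simp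
qed

theorem proposition4p3:
  fixes A Qs :: "nat \<Rightarrow> real^'n^'n" and s :: nat
  assumes A_inv: "\<forall>n. invertible (A n)"
    and A_bdd: "\<exists>C. \<forall>n. norm (A n) \<le> C \<and> norm (matrix_inv (A n)) \<le> C"
    and Q_inv: "\<forall>n. invertible (Qs n)"
    and s: "1 \<le> s" "s \<le> CARD('n)"
  defines "At \<equiv> (\<lambda>n. Qs (Suc n) ** A n ** matrix_inv (Qs n))"
  shows
   "((\<exists>q :: nat \<Rightarrow> real. (\<forall>n. q n \<noteq> 0 \<and> Qs n = q n *\<^sub>R mat 1)) \<longrightarrow>
       theta_sup_limsup s A = theta_sup_limsup s At \<and>
       theta_sup_liminf s A = theta_sup_liminf s At \<and>
       theta_limsup_sup s A = theta_limsup_sup s At \<and>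
       theta_liminf_sup s A = theta_liminf_sup s At)
    \<and> (\<forall>Q. Qs \<longlonglongrightarrow> Q \<and> orthogonal_matrix Q \<longrightarrow>
       theta_sup_limsup s A = theta_sup_limsup s At \<and>
       theta_sup_liminf s A = theta_sup_liminf s At \<and>
       theta_limsup_sup s A = theta_limsup_sup s At \<and>
       theta_liminf_sup s A = theta_liminf_sup s At)
    \<and> (\<forall>Q. Qs \<longlonglongrightarrow> Q \<and> invertible Q \<longrightarrow>
       (theta_sup_limsup s A = 0 \<longleftrightarrow> theta_sup_limsup s At = 0) \<and>
       (theta_sup_liminf s A = 0 \<longleftrightarrow> theta_sup_liminf s At = 0) \<and>
       (theta_limsup_sup s A = 0 \<longleftrightarrow> theta_limsup_sup s At = 0) \<and>
       (theta_liminf_sup s A = 0 \<longleftrightarrow> theta_liminf_sup s At = 0))"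
proof -
  have C: "0 \<le> 4 * norm Q * norm (matrix_inv Q)" for Q :: "real^'n^'n"
    by (intro mult_nonneg_nonneg) simp_all
  show ?thesis
    using angular_values_conj_scalar[OF A_inv Q_inv s(1)]
      angular_values_conj_eq[OF A_inv Q_inv s(1) sub_angle_mimage_steps_close[OF Q_inv]]
      angular_values_conj_zero_iff[OF A_inv Q_inv s C sub_angle_mimage_steps_comparable[OF Q_inv]] s(1)
    unfolding At_def by blast
qed

end
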